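(* In the coordinates $[z_0,z_1,z_2,z_3,x]$, the four points $\mathbf p_1,\dots,\mathbf p_4$, namely $[-1,0,1,0,0]$, $[0,-1,0,1,0]$, $[0,1,0,1,0]$, $[1,0,1,0,0]$, are singular points of every curve $HC_F(\mathbf v,d)$, $[\mathbf v,d]\in\mathbb{C}P^4$. The four points $[0,0,1,1,\sqrt{-1}]$, $[0,0,1,1,-\sqrt{-1}]$, $[0,0,1,-1,\sqrt{-1}]$, $[0,0,1,-1,-\sqrt{-1}]$ are not singular points of $HC_F(\mathbf v,d)$ if $v_{j1}^2+v_{j2}^2\neq 0$ for $j=1$ or for $j=2$. Consequently, for generic $[\mathbf v,d]$ the only singular points of $HC_F(\mathbf v,d)$ are $\mathbf p_1,\mathbf p_2,\mathbf p_3,\mathbf p_4$; moreover the conditions defining this generic set include that $v_{j1}^2+v_{j2}^2\neq0$ for $j=1$ or for $j=2$.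
   Context: On $\mathbb{C}P^4$ use homogeneous coordinates $[z_0,z_1,z_2,z_3,x]$. For parameters $[\mathbf v,d]=[v_{11},v_{12},v_{21},v_{22},d]\in\mathbb{C}P^4$ (complex, not all zero), $HC_F(\mathbf v,d)$ is the subvariety of $\mathbb{C}P^4$ defined by the three quadrics $z_2^2-z_0^2-(z_3^2-z_1^2)=0$, $x^2+z_2^2-z_0^2=0$, and $(v_{22}z_0-v_{12}z_1)x+v_{21}z_0z_3-v_{11}z_1z_2-dz_0z_1=0$. (These coordinates relate to coordinates $[u,y_1,y_2,r_1,r_2]$ by $z_0=4r_1$, $z_1=4r_2$, $z_2=4(u-y_1)$, $z_3=-4(u+y_1)$, $x=-4y_2$; then the first two quadrics cut out the surface $\{(u-y_1)^2+y_2^2=r_1^2,\ (u+y_1)^2+y_2^2=r_2^2\}$.) A point of $HC_F(\mathbf v,d)$ is singular if the $3\times5$ Jacobian matrix of these three defining polynomials has rank less than $3$ there. "For generic $[\mathbf v,d]$" means: for all $[\mathbf v,d]$ in some nonempty Zariski-open subset of the parameter space $\mathbb{C}P^4$ (the complement of the common zero set of finitely many homogeneous polynomials in $v_{11},v_{12},v_{21},v_{22},d$). *)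

theory Defs
  imports "HOL-Analysis.Analysis"
begin

text \<open>Points of CP^4 are represented by nonzero vectors in complex^5 (coordinates
  z$1 = z_0, z$2 = z_1, z$3 = z_2, z$4 = z_3, z$5 = x); parameters [v,d] likewise
  by nonzero w :: complex^5 with w$1 = v11, w$2 = v12, w$3 = v21, w$4 = v22, w$5 = d.\<close>

definition quadF1 :: "complex^5 \<Rightarrow> complex" where
  "quadF1 z = (z$3)^2 - (z$1)^2 - ((z$4)^2 - (z$2)^2)"

definition quadF2 :: "complex^5 \<Rightarrow> complex" where
  "quadF2 z = (z$5)^2 + (z$3)^2 - (z$1)^2"

definition quadF3 :: "complex^5 \<Rightarrow> complex^5 \<Rightarrow> complex" where
  "quadF3 w z = (w$4 * z$1 - w$2 * z$2) * z$5 + w$3 * z$1 * z$4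
                 - w$1 * z$2 * z$3 - w$5 * z$1 * z$2"

text \<open>The curve HC_F(v,d), as the set of nonzero representatives of its points.\<close>
definition HCF :: "complex^5 \<Rightarrow> (complex^5) set" where
  "HCF w = {z. z \<noteq> 0 \<and> quadF1 z = 0 \<and> quadF2 z = 0 \<and> quadF3 w z = 0}"

definition jacHC :: "complex^5 \<Rightarrow> complex^5 \<Rightarrow> complex^5^3" where
  "jacHC w z = vector [
     vector [-2 * z$1, 2 * z$2, 2 * z$3, -2 * z$4, 0],
     vector [-2 * z$1, 0, 2 * z$3, 0, 2 * z$5],
     vector [w$4 * z$5 + w$3 * z$4 - w$5 * z$2,
             - w$2 * z$5 - w$1 * z$3 - w$5 * z$1,
             - w$1 * z$2,
             w$3 * z$1,
             w$4 * z$1 - w$2 * z$2]]"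

definition singular_pt :: "complex^5 \<Rightarrow> complex^5 \<Rightarrow> bool" where
  "singular_pt w z \<longleftrightarrow> z \<in> HCF w \<and> rank (jacHC w z) < 3"

definition proj_eq :: "complex^5 \<Rightarrow> complex^5 \<Rightarrow> bool" where
  "proj_eq z z' \<longleftrightarrow> (\<exists>c. c \<noteq> 0 \<and> z' = c *s z)"

definition hom_poly :: "nat \<Rightarrow> (complex^5 \<Rightarrow> complex) \<Rightarrow> bool" where
  "hom_poly k p \<longleftrightarrow> (\<exists>S c. finite S \<and> (\<forall>e\<in>S. (\<Sum>i\<in>UNIV. e i) = k) \<and>
      (\<forall>w. p w = (\<Sum>e\<in>S. c e * (\<Prod>i\<in>UNIV. (w$i) ^ e (i::5)))))"

text \<open>A property holds for generic [v,d]: it holds on a nonempty Zariski-open subset of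
  CP^4, the complement of the common zero set of finitely many homogeneous polynomials.\<close>
definition generic_param :: "(complex^5 \<Rightarrow> bool) \<Rightarrow> bool" where
  "generic_param Q \<longleftrightarrow> (\<exists>P. finite P \<and> (\<forall>p\<in>P. \<exists>k. hom_poly k p) \<and>
      (\<exists>w. w \<noteq> 0 \<and> (\<exists>p\<in>P. p w \<noteq> 0)) \<and>
      (\<forall>w. w \<noteq> 0 \<and> (\<exists>p\<in>P. p w \<noteq> 0) \<longrightarrow> Q w))"

definition sing_pts :: "(complex^5) list" where
  "sing_pts = [vector [-1,0,1,0,0], vector [0,-1,0,1,0], vector [0,1,0,1,0], vector [1,0,1,0,0]]"

definition other_pts :: "(complex^5) list" where
  "other_pts = [vector [0,0,1,1,\<i>], vector [0,0,1,1,-\<i>], vector [0,0,1,-1,\<i>], vector [0,0,1,-1,-\<i>]]"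

end

theory Submission
  imports Defs
begin

(* If y3 = 0 the surface F1 = F2 = 0 is itself singular at z, which forces z onto one of
   the lines {z1 = z3 = x = 0}, {z0 = z2 = x = 0}; the curve meets them exactly in p1, ..., p4, and
   there the first two Jacobian rows are dependent. If y3 \<noteq> 0, eliminating y1, y2 leaves two
   relations between z and [v,d]. Off x = 0 they force (v11, v12) to be parallel
   to (z2, x) and (v21, v22) to (z3, x), so l = (v11 z2 + v12 x)/z0 and m = (v21 z3 + v22 x)/z1
   satisfy l^2 = v11^2 + v12^2, m^2 = v21^2 + v22^2, and the third quadric becomes d = m - l.
   Excluding all these coincidences is one homogeneous polynomial condition on [v,d]. At the
   points [0,0,1,\<plusminus>1,\<plusminus>i] the third Jacobian row has to vanish, which makes both
   v11^2 + v12^2 and v21^2 + v22^2 zero. *)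

lemma vector_5 [simp]:
  "(vector [a, b, c, d, e] :: 'a::zero^5) $ 1 = a"
  "(vector [a, b, c, d, e] :: 'a^5) $ 2 = b"
  "(vector [a, b, c, d, e] :: 'a^5) $ 3 = c"
  "(vector [a, b, c, d, e] :: 'a^5) $ 4 = d"
  "(vector [a, b, c, d, e] :: 'a^5) $ 5 = e"
  unfolding vector_def by simp_all

lemma exhaust_5:
  fixes i :: 5
  shows "i = 1 \<or> i = 2 \<or> i = 3 \<or> i = 4 \<or> i = 5"
proof (induct i)
  case (of_int k)
  then have "k = 0 \<or> k = 1 \<or> k = 2 \<or> k = 3 \<or> k = 4" by fastforce
  then show ?case by auto
qed

lemma forall_5: "(\<forall>i::5. P i) \<longleftrightarrow> P 1 \<and> P 2 \<and> P 3 \<and> P 4 \<and> P 5"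
  by (metis exhaust_5)

lemma vec_eq_5: "(u :: 'a^5) = v \<longleftrightarrow> u$1 = v$1 \<and> u$2 = v$2 \<and> u$3 = v$3 \<and> u$4 = v$4 \<and> u$5 = v$5"
  by (simp add: vec_eq_iff forall_5)

lemma vector_matrix_mult_eq_sum_rows:
  fixes A :: "'a::comm_semiring_1^'n^'m"
  shows "y v* A = (\<Sum>i\<in>UNIV. y$i *s A$i)"
  by (simp add: vec_eq_iff vector_matrix_mult_def sum_component mult.commute)

lemma rank_less_nrows_iff:
  fixes A :: "'a::field^'n^'m"
  shows "rank A < CARD('m) \<longleftrightarrow> (\<exists>y. y \<noteq> 0 \<and> y v* A = 0)"
proof
  assume "rank A < CARD('m)"
  show "\<exists>y. y \<noteq> 0 \<and> y v* A = 0"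
  proof (cases "inj (($) A)")
    case False
    then obtain i j where "i \<noteq> j" "A$i = A$j" unfolding inj_def by blast
    have "(axis i 1 - axis j 1) v* A = A$i - A$j"
      by (simp add: vector_matrix_mult_eq_sum_rows vector_sub_rdistrib sum_subtractf axis_def
          if_distrib[of "\<lambda>c. c *s _"] cong: if_cong)
    with \<open>i \<noteq> j\<close> \<open>A$i = A$j\<close> show ?thesis
      by (intro exI[of _ "axis i 1 - axis j 1"]) (auto simp: axis_eq_axis)
  next
    case True
    have rows: "rows A = range (($) A)" by (auto simp: rows_def row_def vec_lambda_eta)
    have "card (rows A) = CARD('m)" unfolding rows using True by (simp add: card_image)
    then have "vec.dependent (rows A)"
      using \<open>rank A < CARD('m)\<close> vec.dim_eq_card_independent by (force simp: row_rank_def_gen)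
    then obtain u where u: "\<exists>v\<in>rows A. u v \<noteq> 0" "(\<Sum>v\<in>rows A. u v *s v) = 0"
      by (auto simp: vec.dependent_finite rows)
    have "(\<chi> i. u (A$i)) v* A = (\<Sum>v\<in>rows A. u v *s v)"
      unfolding rows vector_matrix_mult_eq_sum_rows using True by (simp add: sum.reindex)
    with u show ?thesis
      by (intro exI[of _ "\<chi> i. u (A$i)"]) (auto simp: rows vec_eq_iff)
  qed
next
  assume "\<exists>y. y \<noteq> 0 \<and> y v* A = 0"
  then obtain y k where y: "y v* A = 0" "y$k \<noteq> 0" by (auto simp: vec_eq_iff)
  define R where "R = ($) A ` (UNIV - {k})"
  have "A$k = (1 / y$k) *s (y$k *s A$k)"
    using y(2) by (simp add: vector_smult_assoc)
  also have "y$k *s A$k = - (\<Sum>i\<in>UNIV - {k}. y$i *s A$i)"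
    using y unfolding vector_matrix_mult_eq_sum_rows
    by (simp add: sum.remove[of UNIV k] eq_neg_iff_add_eq_0)
  finally have Ak: "A$k = (1 / y$k) *s - (\<Sum>i\<in>UNIV - {k}. y$i *s A$i)" .
  have "A$k \<in> vec.span R"
    unfolding Ak R_def by (intro vec.span_scale vec.span_neg vec.span_sum vec.span_base) auto
  then have "rows A \<subseteq> vec.span R"
    by (auto simp: rows_def row_def vec_lambda_eta R_def intro: vec.span_base)
  then have "rank A \<le> card R" unfolding row_rank_def_gen R_def by (rule vec.dim_le_card) simp
  also have "\<dots> \<le> card (UNIV - {k})" unfolding R_def by (rule card_image_le) simp
  also have "\<dots> < CARD('m)" by (simp add: card_Diff_subset)
  finally show "rank A < CARD('m)" .
qed

lemma hom_poly_const: "hom_poly 0 (\<lambda>w. c)"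
  unfolding hom_poly_def by (intro exI[of _ "{\<lambda>i. 0}"] exI[of _ "\<lambda>_. c"]) simp

lemma hom_poly_coordinate: "hom_poly 1 (\<lambda>w. w$j)"
  unfolding hom_poly_def
proof (intro exI[of _ "{\<lambda>i. if i = j then 1 else 0}"] exI[of _ "\<lambda>_. 1"] conjI allI)
  fix w :: "complex^5"
  have "(\<Prod>i\<in>UNIV. (w$i) ^ (if i = j then 1 else 0)) = (\<Prod>i\<in>UNIV. if i = j then w$i else 1)"
    by (rule prod.cong) auto
  then show "w$j = (\<Sum>e\<in>{\<lambda>i. if i = j then 1 else 0}. 1 * (\<Prod>i\<in>UNIV. (w$i) ^ e i))"
    by simp
qed auto

lemma hom_poly_add:
  assumes "hom_poly k p" "hom_poly k q"
  shows "hom_poly k (\<lambda>w. p w + q w)"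
proof -
  obtain S1 c1 where S1: "finite S1" "\<forall>e\<in>S1. (\<Sum>i\<in>UNIV. e i) = k"
    and p: "\<And>w. p w = (\<Sum>e\<in>S1. c1 e * (\<Prod>i\<in>UNIV. (w$i) ^ e i))"
    using assms(1) unfolding hom_poly_def by blast
  obtain S2 c2 where S2: "finite S2" "\<forall>e\<in>S2. (\<Sum>i\<in>UNIV. e i) = k"
    and q: "\<And>w. q w = (\<Sum>e\<in>S2. c2 e * (\<Prod>i\<in>UNIV. (w$i) ^ e i))"
    using assms(2) unfolding hom_poly_def by blast
  define c where "c e = (if e \<in> S1 then c1 e else 0) + (if e \<in> S2 then c2 e else 0)" for e
  have "p w + q w = (\<Sum>e\<in>S1 \<union> S2. c e * (\<Prod>i\<in>UNIV. (w$i) ^ e i))" for w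
    unfolding p q c_def distrib_right sum.distrib if_distrib[of "\<lambda>a. a * _"] mult_zero_left
    using S1(1) S2(1) by (simp add: sum.If_cases Int_absorb2)
  with S1 S2 show ?thesis
    unfolding hom_poly_def by (intro exI[of _ "S1 \<union> S2"] exI[of _ c]) auto
qed

lemma hom_poly_mult:
  assumes "hom_poly k p" "hom_poly l q"
  shows "hom_poly (k + l) (\<lambda>w. p w * q w)"
proof -
  obtain S1 c1 where S1: "finite S1" "\<forall>e\<in>S1. (\<Sum>i\<in>UNIV. e i) = k"
    and p: "\<And>w. p w = (\<Sum>e\<in>S1. c1 e * (\<Prod>i\<in>UNIV. (w$i) ^ e i))"
    using assms(1) unfolding hom_poly_def by blast
  obtain S2 c2 where S2: "finite S2" "\<forall>e\<in>S2. (\<Sum>i\<in>UNIV. e i) = l"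
    and q: "\<And>w. q w = (\<Sum>e\<in>S2. c2 e * (\<Prod>i\<in>UNIV. (w$i) ^ e i))"
    using assms(2) unfolding hom_poly_def by blast
  define g where "g = (\<lambda>(e, f) (i::5). e i + f i :: nat)"
  define c where "c h = (\<Sum>x\<in>{x\<in>S1 \<times> S2. g x = h}. c1 (fst x) * c2 (snd x))" for h
  have "p w * q w = (\<Sum>h\<in>g ` (S1 \<times> S2). c h * (\<Prod>i\<in>UNIV. (w$i) ^ h i))" for w
  proof -
    let ?m = "\<lambda>e. \<Prod>i\<in>UNIV. (w$i) ^ e i"
    have "p w * q w = (\<Sum>x\<in>S1 \<times> S2. c1 (fst x) * c2 (snd x) * ?m (g x))"
      unfolding p q sum_product sum.cartesian_product g_def
      by (intro sum.cong) (auto simp: power_add prod.distrib)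
    also have "\<dots> = (\<Sum>h\<in>g ` (S1 \<times> S2). \<Sum>x\<in>{x\<in>S1 \<times> S2. g x = h}. c1 (fst x) * c2 (snd x) * ?m (g x))"
      using S1(1) S2(1) by (intro sum.image_gen) simp
    also have "\<dots> = (\<Sum>h\<in>g ` (S1 \<times> S2). c h * ?m h)"
      unfolding c_def by (intro sum.cong) (simp_all add: sum_distrib_right)
    finally show ?thesis .
  qed
  moreover have "(\<Sum>i\<in>UNIV. h i) = k + l" if "h \<in> g ` (S1 \<times> S2)" for h
    using that S1(2) S2(2) by (auto simp: g_def sum.distrib)
  ultimately show ?thesis
    using S1(1) S2(1) unfolding hom_poly_def by (intro exI[of _ "g ` (S1 \<times> S2)"] exI[of _ c]) auto
qed

lemma hom_poly_cmult: "hom_poly k p \<Longrightarrow> hom_poly k (\<lambda>w. c * p w)"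
  using hom_poly_mult[OF hom_poly_const] by fastforce

lemma hom_poly_diff:
  assumes "hom_poly k p" "hom_poly k q"
  shows "hom_poly k (\<lambda>w. p w - q w)"
  using hom_poly_add[OF assms(1) hom_poly_cmult[OF assms(2), of "-1"]] by simp

lemma hom_poly_power: "hom_poly k p \<Longrightarrow> hom_poly (n * k) (\<lambda>w. p w ^ n)"
proof (induction n)
  case 0
  show ?case using hom_poly_const[of 1] by simp
next
  case (Suc n)
  then show ?case using hom_poly_mult[OF Suc.prems Suc.IH] by simp
qed

lemma coordinate_lines_if_x_eq_0:
  fixes z0 z1 z2 z3 x v11 v12 v21 v22 d :: complex
  assumes "z0^2 = z2^2 + x^2" "z1^2 = z3^2 + x^2"
    and "z0 * (v22 * x + v21 * z3) - z1 * (v12 * x + v11 * z2) = d * z0 * z1" "x = 0"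
    and "(v21 - d)^2 - v11^2 \<noteq> 0" "(v21 + d)^2 - v11^2 \<noteq> 0"
  shows "z0 = 0 \<and> z2 = 0 \<or> z1 = 0 \<and> z3 = 0"
proof -
  have "z0^2 = z2^2" "z1^2 = z3^2" "v21 * z0 * z3 - v11 * z1 * z2 = d * z0 * z1"
    using assms(1-4) by (simp_all add: algebra_simps)
  \<comment> \<open>squaring away the unknown signs in z2 = \<plusminus>z0, z3 = \<plusminus>z1\<close>
  then have "(z0 * z1)^4 * (((v21 - d)^2 - v11^2) * ((v21 + d)^2 - v11^2)) = 0"
    by algebra
  then have "z0 = 0 \<or> z1 = 0" using assms(5,6) by simp
  then show ?thesis using assms(1,2,4) by auto
qed

lemma tangency_norm_identity:
  fixes z0 z1 z2 z3 x v11 v12 v21 v22 d :: complex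
  assumes C: "z0^2 = z2^2 + x^2"
    and Q: "z0 * (v22 * x + v21 * z3) - z1 * (v12 * x + v11 * z2) = d * z0 * z1"
    and T: "z2 * (v22 * x + v21 * z3 - d * z1) = v11 * z0 * z1"
    and "x \<noteq> 0" "z1 \<noteq> 0" "v11^2 + v12^2 \<noteq> 0"
  shows "z0 \<noteq> 0 \<and> (v11 * z2 + v12 * x)^2 = (v11^2 + v12^2) * z0^2"
proof -
  have "z1 * x * (v12 * z2 - v11 * x) = 0"
    using C Q T by algebra
  then have par: "v11 * x = v12 * z2" using \<open>x \<noteq> 0\<close> \<open>z1 \<noteq> 0\<close> by simp
  have lagrange: "(v11 * z2 + v12 * x)^2 + (v11 * x - v12 * z2)^2 = (v11^2 + v12^2) * (z2^2 + x^2)"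
    by algebra
  have "z0 \<noteq> 0"
  proof
    assume "z0 = 0"
    then have "(v11^2 + v12^2) * x^2 = 0" using C par by algebra
    with assms show False by simp
  qed
  with lagrange par C show ?thesis by simp
qed

lemma no_tangency_if_x_neq_0:
  fixes z0 z1 z2 z3 x v11 v12 v21 v22 d :: complex
  assumes C1: "z0^2 = z2^2 + x^2" and C2: "z1^2 = z3^2 + x^2"
    and Q: "z0 * (v22 * x + v21 * z3) - z1 * (v12 * x + v11 * z2) = d * z0 * z1"
    and T1: "z2 * (v22 * x + v21 * z3 - d * z1) = v11 * z0 * z1"
    and T2: "z3 * (v12 * x + v11 * z2 + d * z0) = v21 * z0 * z1"
    and "x \<noteq> 0" and N1: "v11^2 + v12^2 \<noteq> 0" and N2: "v21^2 + v22^2 \<noteq> 0"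
    and D: "(d^2 - (v11^2 + v12^2) - (v21^2 + v22^2))^2 - 4 * (v11^2 + v12^2) * (v21^2 + v22^2) \<noteq> 0"
  shows False
proof (cases "z0 = 0 \<and> z1 = 0")
  case True
  then have "v22 * x + v21 * z3 = 0" "z3^2 + x^2 = 0" using T1 C1 C2 \<open>x \<noteq> 0\<close> by auto
  then have "(v21^2 + v22^2) * x^2 = 0" by algebra
  with N2 \<open>x \<noteq> 0\<close> show False by simp
next
  case False
  \<comment> \<open>the hypotheses are symmetric under (z0, z2, v11, v12) \<leftrightarrow> (z1, z3, v21, v22), d \<leftrightarrow> -d\<close>
  have Q': "z1 * (v12 * x + v11 * z2) - z0 * (v22 * x + v21 * z3) = (- d) * z1 * z0"
    using Q by algebra
  have T2': "z3 * (v12 * x + v11 * z2 - (- d) * z0) = v21 * z1 * z0"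
    using T2 by algebra
  have "z0 \<noteq> 0" and l: "(v11 * z2 + v12 * x)^2 = (v11^2 + v12^2) * z0^2" if "z1 \<noteq> 0"
    using tangency_norm_identity[OF C1 Q T1 \<open>x \<noteq> 0\<close> that N1] by auto
  moreover have "z1 \<noteq> 0" and m: "(v21 * z3 + v22 * x)^2 = (v21^2 + v22^2) * z1^2" if "z0 \<noteq> 0"
    using tangency_norm_identity[OF C2 Q' T2' \<open>x \<noteq> 0\<close> that N2] by auto
  ultimately have "z0 \<noteq> 0" "z1 \<noteq> 0" using False by blast+
  define l m where "l = (v11 * z2 + v12 * x) / z0" and "m = (v21 * z3 + v22 * x) / z1"
  have "l^2 = v11^2 + v12^2" "m^2 = v21^2 + v22^2"
    using l m \<open>z0 \<noteq> 0\<close> \<open>z1 \<noteq> 0\<close> by (simp_all add: l_def m_def power_divide)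
  moreover have "d = m - l"
    using Q \<open>z0 \<noteq> 0\<close> \<open>z1 \<noteq> 0\<close> by (simp add: l_def m_def field_simps)
  ultimately have "(d^2 - (v11^2 + v12^2) - (v21^2 + v22^2))^2 - 4 * (v11^2 + v12^2) * (v21^2 + v22^2) = 0"
    by algebra
  with D show False ..
qed

definition on_coordinate_lines :: "complex^5 \<Rightarrow> bool" where
  "on_coordinate_lines z \<longleftrightarrow> (z$2 = 0 \<and> z$4 = 0 \<and> z$5 = 0) \<or> (z$1 = 0 \<and> z$3 = 0 \<and> z$5 = 0)"

text \<open>One factor for each coincidence that could produce further singular points:
  v11^2 + v12^2 = 0 or v21^2 + v22^2 = 0, d = \<plusminus>v21 \<plusminus> v11 (on x = 0), and d = \<plusminus>l \<plusminus> m with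
  l^2 = v11^2 + v12^2, m^2 = v21^2 + v22^2 (off x = 0).\<close>

definition degeneracy_poly :: "complex^5 \<Rightarrow> complex" where
  "degeneracy_poly w =
     ((w$1)^2 + (w$2)^2) * ((w$3)^2 + (w$4)^2) * ((w$3 - w$5)^2 - (w$1)^2) * ((w$3 + w$5)^2 - (w$1)^2) *
     (((w$5)^2 - ((w$1)^2 + (w$2)^2) - ((w$3)^2 + (w$4)^2))^2 - 4 * ((w$1)^2 + (w$2)^2) * ((w$3)^2 + (w$4)^2))"

lemma mem_HCF_iff:
  "z \<in> HCF w \<longleftrightarrow> z \<noteq> 0 \<and> (z$1)^2 = (z$3)^2 + (z$5)^2 \<and> (z$2)^2 = (z$4)^2 + (z$5)^2 \<and>
     z$1 * (w$4 * z$5 + w$3 * z$4) - z$2 * (w$2 * z$5 + w$1 * z$3) = w$5 * z$1 * z$2"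
proof -
  have F2: "quadF2 z = 0 \<longleftrightarrow> (z$1)^2 = (z$3)^2 + (z$5)^2"
    unfolding quadF2_def by (auto simp: algebra_simps)
  have "quadF1 z = (z$2)^2 - ((z$4)^2 + (z$5)^2)" if "(z$1)^2 = (z$3)^2 + (z$5)^2"
    unfolding quadF1_def that by (simp add: algebra_simps)
  then have F1: "quadF1 z = 0 \<longleftrightarrow> (z$2)^2 = (z$4)^2 + (z$5)^2" if "(z$1)^2 = (z$3)^2 + (z$5)^2"
    using that by simp
  have "quadF3 w z = z$1 * (w$4 * z$5 + w$3 * z$4) - z$2 * (w$2 * z$5 + w$1 * z$3) - w$5 * z$1 * z$2"
    unfolding quadF3_def by (simp add: algebra_simps)
  then have F3: "quadF3 w z = 0 \<longleftrightarrow>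
      z$1 * (w$4 * z$5 + w$3 * z$4) - z$2 * (w$2 * z$5 + w$1 * z$3) = w$5 * z$1 * z$2"
    by simp
  show ?thesis unfolding HCF_def using F1 F2 F3 by blast
qed

lemma singular_pt_iff: "singular_pt w z \<longleftrightarrow> z \<in> HCF w \<and> (\<exists>y. y \<noteq> 0 \<and> y v* jacHC w z = 0)"
  using rank_less_nrows_iff[of "jacHC w z"] by (simp add: singular_pt_def)

lemma jacHC_rows:
  "jacHC w z $ 1 = vector [-2 * z$1, 2 * z$2, 2 * z$3, -2 * z$4, 0]"
  "jacHC w z $ 2 = vector [-2 * z$1, 0, 2 * z$3, 0, 2 * z$5]"
  "jacHC w z $ 3 = vector [w$4 * z$5 + w$3 * z$4 - w$5 * z$2, - w$2 * z$5 - w$1 * z$3 - w$5 * z$1,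
     - w$1 * z$2, w$3 * z$1, w$4 * z$1 - w$2 * z$2]"
  unfolding jacHC_def by simp_all

lemma jacHC_left_kernel_iff:
  "y v* jacHC w z = 0 \<longleftrightarrow>
     2 * (y$1 + y$2) * z$1 = y$3 * (w$4 * z$5 + w$3 * z$4 - w$5 * z$2) \<and>
     2 * y$1 * z$2 = y$3 * (w$2 * z$5 + w$1 * z$3 + w$5 * z$1) \<and>
     2 * (y$1 + y$2) * z$3 = y$3 * w$1 * z$2 \<and>
     2 * y$1 * z$4 = y$3 * w$3 * z$1 \<and>
     2 * y$2 * z$5 = y$3 * (w$2 * z$2 - w$4 * z$1)"
proof -
  have "y v* jacHC w z = vector [
      y$3 * (w$4 * z$5 + w$3 * z$4 - w$5 * z$2) - 2 * (y$1 + y$2) * z$1,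
      2 * y$1 * z$2 - y$3 * (w$2 * z$5 + w$1 * z$3 + w$5 * z$1),
      2 * (y$1 + y$2) * z$3 - y$3 * w$1 * z$2,
      y$3 * w$3 * z$1 - 2 * y$1 * z$4,
      2 * y$2 * z$5 - y$3 * (w$2 * z$2 - w$4 * z$1)]"
    unfolding vec_eq_5 by (simp add: vector_matrix_mult_def sum_3 jacHC_rows algebra_simps)
  then show ?thesis
    by (simp only: vec_eq_5 vector_5 zero_index right_minus_eq
        eq_commute[of "y$3 * _"] eq_commute[of "y$3 * _ * _"])
qed

lemma proj_eq_sing_pts_iff: "(\<exists>p\<in>set sing_pts. proj_eq p z) \<longleftrightarrow> z \<in> HCF w \<and> on_coordinate_lines z"
proof
  assume "\<exists>p\<in>set sing_pts. proj_eq p z"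
  then show "z \<in> HCF w \<and> on_coordinate_lines z"
    by (auto simp: sing_pts_def proj_eq_def mem_HCF_iff on_coordinate_lines_def vec_eq_5)
next
  assume z: "z \<in> HCF w \<and> on_coordinate_lines z"
  show "\<exists>p\<in>set sing_pts. proj_eq p z"
  proof (cases "z$2 = 0 \<and> z$4 = 0 \<and> z$5 = 0")
    case True
    with z have "z$3 = z$1 \<or> z$3 = - z$1" "z$1 \<noteq> 0"
      by (auto simp: mem_HCF_iff power2_eq_iff vec_eq_5)
    with True have "z = z$1 *s vector [1, 0, 1, 0, 0] \<or> z = (- z$1) *s vector [-1, 0, 1, 0, 0]"
      by (auto simp: vec_eq_5)
    with \<open>z$1 \<noteq> 0\<close>
    have "proj_eq (vector [1, 0, 1, 0, 0]) z \<or> proj_eq (vector [-1, 0, 1, 0, 0]) z"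
      unfolding proj_eq_def by (metis neg_equal_0_iff_equal)
    then show ?thesis by (auto simp: sing_pts_def)
  next
    case False
    with z have "z$1 = 0 \<and> z$3 = 0 \<and> z$5 = 0" by (simp add: on_coordinate_lines_def)
    with z have "z$4 = z$2 \<or> z$4 = - z$2" "z$2 \<noteq> 0"
      by (auto simp: mem_HCF_iff power2_eq_iff vec_eq_5)
    with \<open>z$1 = 0 \<and> z$3 = 0 \<and> z$5 = 0\<close>
    have "z = z$2 *s vector [0, 1, 0, 1, 0] \<or> z = (- z$2) *s vector [0, -1, 0, 1, 0]"
      by (auto simp: vec_eq_5)
    with \<open>z$2 \<noteq> 0\<close>
    have "proj_eq (vector [0, 1, 0, 1, 0]) z \<or> proj_eq (vector [0, -1, 0, 1, 0]) z"
      unfolding proj_eq_def by (metis neg_equal_0_iff_equal)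
    then show ?thesis by (auto simp: sing_pts_def)
  qed
qed

lemma singular_pt_if_on_coordinate_lines:
  assumes "z \<in> HCF w" "on_coordinate_lines z"
  shows "singular_pt w z"
proof -
  have "vector [1, -1, 0] v* jacHC w z = 0" if "z$2 = 0" "z$4 = 0" "z$5 = 0"
    using that by (simp add: jacHC_left_kernel_iff)
  moreover have "vector [0, 1, 0] v* jacHC w z = 0" if "z$1 = 0" "z$3 = 0" "z$5 = 0"
    using that by (simp add: jacHC_left_kernel_iff)
  moreover have "vector [1, -1, 0] \<noteq> (0 :: complex^3)" "vector [0, 1, 0] \<noteq> (0 :: complex^3)"
    by (simp_all add: vec_eq_iff forall_3)
  ultimately show ?thesis
    using assms unfolding singular_pt_iff on_coordinate_lines_def by blast
qed

lemma coordinate_lines_if_surface_singular: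
  assumes "z \<in> HCF w" "y \<noteq> 0" "y v* jacHC w z = 0" "y$3 = 0"
  shows "on_coordinate_lines z"
proof -
  have "y$1 \<noteq> 0 \<or> y$2 \<noteq> 0" using assms(2,4) by (auto simp: vec_eq_iff forall_3)
  then show ?thesis
    using assms(1,3,4) by (auto simp: jacHC_left_kernel_iff mem_HCF_iff on_coordinate_lines_def)
qed

lemma coordinate_lines_if_singular:
  assumes "singular_pt w z" "degeneracy_poly w \<noteq> 0"
  shows "on_coordinate_lines z"
proof -
  obtain y where z: "z \<in> HCF w" and y: "y \<noteq> 0" "y v* jacHC w z = 0"
    using assms(1) by (auto simp: singular_pt_iff)
  show ?thesis
  proof (cases "y$3 = 0")
    case True
    with z y show ?thesis by (rule coordinate_lines_if_surface_singular)
  next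
    case False
    note C = z[unfolded mem_HCF_iff]
    note E = y(2)[unfolded jacHC_left_kernel_iff]
    have "y$3 * (z$3 * (w$4 * z$5 + w$3 * z$4 - w$5 * z$2) - w$1 * z$1 * z$2) = 0"
      using E by algebra
    then have T1: "z$3 * (w$4 * z$5 + w$3 * z$4 - w$5 * z$2) = w$1 * z$1 * z$2"
      using False by simp
    have "y$3 * (z$4 * (w$2 * z$5 + w$1 * z$3 + w$5 * z$1) - w$3 * z$1 * z$2) = 0"
      using E by algebra
    then have T2: "z$4 * (w$2 * z$5 + w$1 * z$3 + w$5 * z$1) = w$3 * z$1 * z$2"
      using False by simp
    have D: "(w$1)^2 + (w$2)^2 \<noteq> 0" "(w$3)^2 + (w$4)^2 \<noteq> 0"
      "(w$3 - w$5)^2 - (w$1)^2 \<noteq> 0" "(w$3 + w$5)^2 - (w$1)^2 \<noteq> 0"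
      "((w$5)^2 - ((w$1)^2 + (w$2)^2) - ((w$3)^2 + (w$4)^2))^2
         - 4 * ((w$1)^2 + (w$2)^2) * ((w$3)^2 + (w$4)^2) \<noteq> 0"
      using assms(2) by (auto simp: degeneracy_poly_def)
    show ?thesis
    proof (cases "z$5 = 0")
      case True
      with coordinate_lines_if_x_eq_0[of "z$1" "z$3" "z$5" "z$2" "z$4"] C D(3,4)
      show ?thesis by (auto simp: on_coordinate_lines_def)
    next
      case False
      with no_tangency_if_x_neq_0[of "z$1" "z$3" "z$5" "z$2" "z$4"] C T1 T2 D(1,2,5)
      show ?thesis by blast
    qed
  qed
qed

lemma singular_pt_iff_proj_eq_sing_pts:
  assumes "degeneracy_poly w \<noteq> 0"
  shows "singular_pt w z \<longleftrightarrow> (\<exists>p\<in>set sing_pts. proj_eq p z)"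
  using proj_eq_sing_pts_iff singular_pt_if_on_coordinate_lines coordinate_lines_if_singular[OF _ assms]
  unfolding singular_pt_def by blast

lemma other_pt_not_singular:
  assumes "s^2 = 1" "t^2 = -1" "(w$1)^2 + (w$2)^2 \<noteq> 0 \<or> (w$3)^2 + (w$4)^2 \<noteq> 0"
  shows "\<not> singular_pt w (vector [0, 0, 1, s, t])"
proof
  assume "singular_pt w (vector [0, 0, 1, s, t])"
  then obtain y where y: "y \<noteq> 0" "y v* jacHC w (vector [0, 0, 1, s, t]) = 0"
    by (auto simp: singular_pt_iff)
  have "s \<noteq> 0" "t \<noteq> 0" using assms(1,2) by auto
  with y(2) have "y$1 = 0" "y$2 = 0" by (simp_all add: jacHC_left_kernel_iff)
  with y(1) have "y$3 \<noteq> 0" by (auto simp: vec_eq_iff forall_3)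
  with y(2) have "w$2 * t + w$1 = 0" "w$4 * t + w$3 * s = 0"
    by (simp_all add: jacHC_left_kernel_iff)
  then have "(w$1)^2 + (w$2)^2 = 0" "(w$3)^2 + (w$4)^2 = 0"
    using assms(1,2) by algebra+
  with assms(3) show False by simp
qed

lemma hom_poly_degeneracy_poly: "hom_poly 12 degeneracy_poly"
proof -
  have sq: "hom_poly 2 (\<lambda>w. (w$j)^2)" for j
    using hom_poly_power[OF hom_poly_coordinate, of 2 j] by simp
  have N: "hom_poly 2 (\<lambda>w. (w$i)^2 + (w$j)^2)" for i j
    by (rule hom_poly_add[OF sq sq])
  have "hom_poly 2 (\<lambda>w. (w$3 + c * w$5)^2)" for c
    using hom_poly_power[OF hom_poly_add[OF hom_poly_coordinate hom_poly_cmult[OF hom_poly_coordinate]], of 2]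
    by simp
  then have L: "hom_poly 2 (\<lambda>w. (w$3 + c * w$5)^2 - (w$1)^2)" for c
    by (rule hom_poly_diff[OF _ sq])
  have "hom_poly 4 (\<lambda>w. ((w$5)^2 - ((w$1)^2 + (w$2)^2) - ((w$3)^2 + (w$4)^2))^2)"
    using hom_poly_power[OF hom_poly_diff[OF hom_poly_diff[OF sq N] N], of 2] by simp
  moreover have "hom_poly 4 (\<lambda>w. 4 * ((w$1)^2 + (w$2)^2) * ((w$3)^2 + (w$4)^2))"
    using hom_poly_mult[OF hom_poly_cmult[OF N, of 4] N] by simp
  ultimately have "hom_poly 4 (\<lambda>w. ((w$5)^2 - ((w$1)^2 + (w$2)^2) - ((w$3)^2 + (w$4)^2))^2
      - 4 * ((w$1)^2 + (w$2)^2) * ((w$3)^2 + (w$4)^2))"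
    by (rule hom_poly_diff)
  from hom_poly_mult[OF hom_poly_mult[OF hom_poly_mult[OF hom_poly_mult[OF N N] L[of "-1"]] L[of 1]] this]
  show ?thesis unfolding degeneracy_poly_def[abs_def] by simp
qed

theorem lemma5p5:
  shows "(\<forall>w::complex^5. w \<noteq> 0 \<longrightarrow> (\<forall>p\<in>set sing_pts. singular_pt w p))
    \<and> (\<forall>w::complex^5. w \<noteq> 0 \<longrightarrow> ((w$1)^2 + (w$2)^2 \<noteq> 0 \<or> (w$3)^2 + (w$4)^2 \<noteq> 0) \<longrightarrow>
          (\<forall>q\<in>set other_pts. \<not> singular_pt w q))
    \<and> generic_param (\<lambda>w. (\<forall>z. singular_pt w z \<longleftrightarrow> (\<exists>p\<in>set sing_pts. proj_eq p z))
                         \<and> ((w$1)^2 + (w$2)^2 \<noteq> 0 \<or> (w$3)^2 + (w$4)^2 \<noteq> 0))"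
proof (intro conjI allI impI ballI)
  fix w :: "complex^5" and p
  assume "p \<in> set sing_pts"
  moreover have "proj_eq p p" unfolding proj_eq_def by (intro exI[of _ 1]) simp
  ultimately show "singular_pt w p"
    by (meson proj_eq_sing_pts_iff singular_pt_if_on_coordinate_lines)
next
  fix w :: "complex^5" and q
  assume "(w$1)^2 + (w$2)^2 \<noteq> 0 \<or> (w$3)^2 + (w$4)^2 \<noteq> 0" "q \<in> set other_pts"
  moreover have "\<i>^2 = -1" "(- \<i>)^2 = -1" by (simp_all add: power2_eq_square)
  ultimately show "\<not> singular_pt w q"
    unfolding other_pts_def using other_pt_not_singular by auto
next
  have "degeneracy_poly (vector [1, 0, 1, 0, 5]) \<noteq> 0" "vector [1, 0, 1, 0, 5] \<noteq> (0 :: complex^5)"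
    by (simp_all add: degeneracy_poly_def vec_eq_5)
  moreover have "(w$1)^2 + (w$2)^2 \<noteq> 0 \<or> (w$3)^2 + (w$4)^2 \<noteq> 0" if "degeneracy_poly w \<noteq> 0" for w
    using that by (auto simp: degeneracy_poly_def)
  ultimately show "generic_param (\<lambda>w. (\<forall>z. singular_pt w z \<longleftrightarrow> (\<exists>p\<in>set sing_pts. proj_eq p z))
                         \<and> ((w$1)^2 + (w$2)^2 \<noteq> 0 \<or> (w$3)^2 + (w$4)^2 \<noteq> 0))"
    unfolding generic_param_def using hom_poly_degeneracy_poly singular_pt_iff_proj_eq_sing_pts
    by (intro exI[of _ "{degeneracy_poly}"]) blast
qed

end
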